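(* Let $X$ be a rotationally invariant isotropic random vector in $\mathbb{R}^n$ and let $\vartheta$ be uniformly distributed on $S^{n-1}$. Then $\Lambda_X(\xi)\geqslant\Lambda_{\sqrt n\vartheta}(\xi)$ for every $\xi\in\mathbb{R}^n$, and consequently $\Lambda_X^\ast\leqslant\Lambda^\ast_{\sqrt n\vartheta}$ pointwise on $\mathbb{R}^n$.
   Context: A random vector $X$ is isotropic if $\mathbb{E}\langle X,\theta\rangle=0$ and $\mathbb{E}\langle X,\theta\rangle^2=1$ for all $\theta\in S^{n-1}$. $\Lambda_X(\xi)=\log\mathbb{E}e^{\langle X,\xi\rangle}\in(-\infty,+\infty]$ and $\Lambda^\ast_X(x)=\sup_\xi(\langle x,\xi\rangle-\Lambda_X(\xi))$. *)

theory Defs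
  imports "HOL-Probability.Probability"
begin

text \<open>Law of a random vector uniformly distributed on the unit sphere S^(n-1):
  the normalized surface (= cone) measure, obtained as the image of the uniform
  probability on the unit ball under the radial projection x / |x|.\<close>
definition unif_sphere :: "'a::euclidean_space measure" where
  "unif_sphere = distr (uniform_measure lborel (ball 0 1)) borel (\<lambda>x. x /\<^sub>R norm x)"

definition isotropic :: "'s measure \<Rightarrow> ('s \<Rightarrow> 'a::euclidean_space) \<Rightarrow> bool" where
  "isotropic M X \<longleftrightarrow> (\<forall>\<theta>. norm \<theta> = 1 \<longrightarrow>
      integrable M (\<lambda>\<omega>. X \<omega> \<bullet> \<theta>) \<and> (\<integral>\<omega>. X \<omega> \<bullet> \<theta> \<partial>M) = 0 \<and>
      integrable M (\<lambda>\<omega>. (X \<omega> \<bullet> \<theta>)\<^sup>2) \<and> (\<integral>\<omega>. (X \<omega> \<bullet> \<theta>)\<^sup>2 \<partial>M) = 1)"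

definition rot_invariant :: "'s measure \<Rightarrow> ('s \<Rightarrow> 'a::euclidean_space) \<Rightarrow> bool" where
  "rot_invariant M X \<longleftrightarrow> (\<forall>U. orthogonal_transformation U \<longrightarrow>
      distr M borel (\<lambda>\<omega>. U (X \<omega>)) = distr M borel X)"

definition log_laplace :: "'s measure \<Rightarrow> ('s \<Rightarrow> 'a::euclidean_space) \<Rightarrow> 'a \<Rightarrow> ereal" where
  "log_laplace M X \<xi> =
     (let m = (\<integral>\<^sup>+\<omega>. ennreal (exp (X \<omega> \<bullet> \<xi>)) \<partial>M)
      in if m = \<infinity> then \<infinity> else ereal (ln (enn2real m)))"

definition legendre :: "('a::euclidean_space \<Rightarrow> ereal) \<Rightarrow> 'a \<Rightarrow> ereal" where
  "legendre \<Lambda> x = (SUP \<xi>. ereal (x \<bullet> \<xi>) - \<Lambda> \<xi>)"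

end

theory Submission
  imports Defs "HOL-Analysis.Analysis"
begin

text \<open>Write \<open>n = DIM('a)\<close> and \<open>\<Phi>(x) = E exp \<langle>x, \<theta>\<rangle>\<close> for \<open>\<theta>\<close> uniform on the sphere.
  Both \<open>\<Phi>\<close> and the Laplace transform of \<open>X\<close> depend only on the norm of their argument, so
  averaging over \<open>\<theta>\<close> gives \<open>E exp \<langle>X, \<xi>\<rangle> = E \<Phi>(|X| \<xi>)\<close>, while the Laplace transform of
  \<open>sqrt n \<theta>\<close> is \<open>\<Phi>(sqrt n \<xi>)\<close>. By the symmetry \<open>\<theta> \<mapsto> -\<theta>\<close>, \<open>\<Phi>(t \<xi>) = E cosh (t \<langle>\<xi>, \<theta>\<rangle>)\<close>,
  and \<open>t \<mapsto> cosh (b t)\<close> lies above its tangent in the variable \<open>t\<^sup>2\<close>; since isotropy gives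
  \<open>E |X|\<^sup>2 = n\<close>, this yields \<open>E cosh (b |X|) \<ge> cosh (b sqrt n)\<close>, hence \<open>E \<Phi>(|X| \<xi>) \<ge> \<Phi>(sqrt n \<xi>)\<close>.\<close>

lemma orthogonal_transformation_borel_measurable:
  fixes U :: "'a::euclidean_space \<Rightarrow> 'a"
  assumes "orthogonal_transformation U"
  shows "U \<in> borel_measurable borel"
proof -
  have "bounded_linear U"
    using orthogonal_transformation_linear[OF assms] by (simp add: linear_conv_bounded_linear)
  then show ?thesis
    by (intro borel_measurable_continuous_onI linear_continuous_on)
qed

lemma lborel_distr_orthogonal_cart:
  fixes U :: "real^'n::{finite,wellorder} \<Rightarrow> real^'n::_"
  assumes U: "orthogonal_transformation U"
  shows "distr lborel borel U = lborel"
proof (rule lborel_eqI[symmetric])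
  fix l u :: "real^'n::{finite,wellorder}"
  assume "\<And>b. b \<in> Basis \<Longrightarrow> l \<bullet> b \<le> u \<bullet> b"
  then have box: "emeasure lborel (box l u) = (\<Prod>b\<in>Basis. (u - l) \<bullet> b)"
    by (simp add: emeasure_lborel_box_eq)
  have U_borel: "U \<in> borel_measurable borel"
    using U by (rule orthogonal_transformation_borel_measurable)
  have inv_U: "orthogonal_transformation (inv U)"
    using U by (rule orthogonal_transformation_inv)
  have "U -` box l u = inv U ` box l u"
    using orthogonal_transformation_bij[OF U] by (rule bij_vimage_eq_inv_image)
  moreover have "U -` box l u \<in> sets lborel"
    using measurable_sets_borel[OF U_borel, of "box l u"] by simp
  ultimately have "emeasure lborel (U -` box l u) = emeasure lebesgue (inv U ` box l u)"
    by simp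
  also have "\<dots> = measure lebesgue (box l u)"
    using measurable_orthogonal_image[OF inv_U] measure_orthogonal_image[OF inv_U]
    by (simp add: emeasure_eq_measure2)
  finally have "emeasure lborel (U -` box l u) = emeasure lborel (box l u)"
    by (simp add: emeasure_eq_measure2)
  then show "emeasure (distr lborel borel U) (box l u) = (\<Prod>b\<in>Basis. (u - l) \<bullet> b)"
    using U_borel by (simp add: emeasure_distr box)
qed simp

text \<open>The change of variables results for Lebesgue measure are only available on
  \<open>real^'n\<close> with a well-ordered index type, so a general Euclidean space is transported
  there along its basis.\<close>

typedef (overloaded) ('a::euclidean_space) basis_index = "Basis :: 'a set"
  using nonempty_Basis by blast

instance basis_index :: (euclidean_space) finite
proof
  have "(UNIV :: 'a basis_index set) = Abs_basis_index ` Basis"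
    using type_definition.Abs_image[OF type_definition_basis_index] by (rule sym)
  then show "finite (UNIV :: 'a basis_index set)"
    by (metis finite_Basis finite_imageI)
qed

instantiation basis_index :: (euclidean_space) wellorder
begin

definition less_eq_basis_index :: "'a basis_index \<Rightarrow> 'a basis_index \<Rightarrow> bool"
  where "less_eq_basis_index i j \<longleftrightarrow> to_nat i \<le> to_nat j"

definition less_basis_index :: "'a basis_index \<Rightarrow> 'a basis_index \<Rightarrow> bool"
  where "less_basis_index i j \<longleftrightarrow> to_nat i < to_nat j"

instance
proof
  fix P :: "'a basis_index \<Rightarrow> bool" and a
  assume "\<And>i. (\<And>j. j < i \<Longrightarrow> P j) \<Longrightarrow> P i"
  then show "P a"
    unfolding less_basis_index_def by (induct a rule: measure_induct_rule[of to_nat]) blast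
qed (auto simp: less_eq_basis_index_def less_basis_index_def intro: injD[OF inj_to_nat])

end

definition coords :: "'a::euclidean_space \<Rightarrow> real^'a basis_index"
  where "coords x = (\<chi> i. x \<bullet> Rep_basis_index i)"

definition of_coords :: "real^'a basis_index \<Rightarrow> 'a::euclidean_space"
  where "of_coords v = (\<Sum>i\<in>UNIV. v $ i *\<^sub>R Rep_basis_index i)"

lemma bij_betw_Rep_basis_index: "bij_betw Rep_basis_index UNIV (Basis :: 'a::euclidean_space set)"
  unfolding bij_betw_def
  using type_definition.Rep_range[OF type_definition_basis_index]
  by (simp add: inj_on_def Rep_basis_index_inject)

lemma Rep_basis_index_Basis: "Rep_basis_index i \<in> Basis"
  using Rep_basis_index by blast

lemma ball_Basis_basis_index:
  "(\<forall>b\<in>(Basis :: 'a::euclidean_space set). P b) \<longleftrightarrow> (\<forall>i. P (Rep_basis_index i))"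
  by (metis Rep_basis_index_Basis Rep_basis_index_cases)

lemma sum_basis_index:
  "(\<Sum>i\<in>UNIV. f (Rep_basis_index i)) = (\<Sum>b\<in>(Basis :: 'a::euclidean_space set). f b)"
  using sum.reindex_bij_betw[OF bij_betw_Rep_basis_index] by blast

lemma prod_basis_index:
  "(\<Prod>i\<in>UNIV. f (Rep_basis_index i)) = (\<Prod>b\<in>(Basis :: 'a::euclidean_space set). f b)"
  using prod.reindex_bij_betw[OF bij_betw_Rep_basis_index] by blast

lemma of_coords_coords [simp]: "of_coords (coords x) = x"
  using sum_basis_index[of "\<lambda>b. (x \<bullet> b) *\<^sub>R b"]
  by (simp add: of_coords_def coords_def euclidean_representation)

lemma inner_of_coords_Rep_basis_index: "of_coords v \<bullet> Rep_basis_index i = v $ i"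
proof -
  have "of_coords v \<bullet> Rep_basis_index i = (\<Sum>j\<in>UNIV. v $ j * (Rep_basis_index j \<bullet> Rep_basis_index i))"
    by (simp add: of_coords_def inner_sum_left)
  also have "\<dots> = (\<Sum>j\<in>UNIV. if j = i then v $ j else 0)"
    by (intro sum.cong refl) (simp add: inner_Basis Rep_basis_index_Basis Rep_basis_index_inject)
  finally show ?thesis
    by simp
qed

lemma coords_of_coords [simp]: "coords (of_coords v) = v"
  by (simp add: coords_def inner_of_coords_Rep_basis_index vec_eq_iff)

lemma inner_coords [simp]: "coords x \<bullet> coords y = x \<bullet> y"
proof -
  have "coords x \<bullet> coords y = (\<Sum>i\<in>UNIV. (x \<bullet> Rep_basis_index i) * (y \<bullet> Rep_basis_index i))"
    by (simp add: inner_vec_def coords_def)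
  also have "\<dots> = (\<Sum>b\<in>Basis. (x \<bullet> b) * (y \<bullet> b))"
    by (rule sum_basis_index)
  also have "\<dots> = x \<bullet> y"
    by (rule euclidean_inner[symmetric])
  finally show ?thesis .
qed

lemma inner_of_coords [simp]: "of_coords v \<bullet> of_coords w = v \<bullet> w"
  by (metis inner_coords coords_of_coords)

lemma linear_coords: "linear coords"
  by (rule linearI) (simp_all add: coords_def vec_eq_iff inner_add_left)

lemma linear_of_coords: "linear of_coords"
  by (rule linearI) (simp_all add: of_coords_def sum.distrib scaleR_add_left scaleR_sum_right)

lemma coords_borel_measurable [measurable]: "coords \<in> borel_measurable borel"
  using linear_coords
  by (intro borel_measurable_continuous_onI linear_continuous_on) (simp add: linear_conv_bounded_linear)

lemma of_coords_borel_measurable [measurable]: "of_coords \<in> borel_measurable borel"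
  using linear_of_coords
  by (intro borel_measurable_continuous_onI linear_continuous_on) (simp add: linear_conv_bounded_linear)

lemma lborel_distr_coords: "distr lborel borel coords = lborel"
proof (rule lborel_eqI[symmetric])
  fix l u :: "real^('a::euclidean_space basis_index)"
  assume lu: "\<And>b. b \<in> Basis \<Longrightarrow> l \<bullet> b \<le> u \<bullet> b"
  have le: "l $ i \<le> u $ i" for i
    using lu[of "axis i 1"] by (simp add: cart_eq_inner_axis)
  have "x \<in> box (of_coords l) (of_coords u) \<longleftrightarrow>
      (\<forall>i. l $ i < x \<bullet> Rep_basis_index i \<and> x \<bullet> Rep_basis_index i < u $ i)" for x :: 'a
    unfolding mem_box ball_Basis_basis_index by (simp add: inner_of_coords_Rep_basis_index)
  then have "coords -` box l u = box (of_coords l) (of_coords u :: 'a)"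
    by (auto simp: mem_box_cart coords_def)
  then have "emeasure (distr lborel borel coords) (box l u)
      = emeasure lborel (box (of_coords l) (of_coords u :: 'a))"
    by (simp add: emeasure_distr)
  also have "\<dots> = (\<Prod>b\<in>Basis. (of_coords u - of_coords l) \<bullet> b)"
    using le by (subst emeasure_lborel_box_eq)
      (simp add: ball_Basis_basis_index inner_of_coords_Rep_basis_index)
  also have "\<dots> = (\<Prod>i\<in>UNIV. u $ i - l $ i)"
    by (simp add: prod_basis_index[symmetric] inner_diff_left inner_of_coords_Rep_basis_index)
  also have "\<dots> = (\<Prod>b\<in>Basis. (u - l) \<bullet> b)"
    by (simp add: Basis_vec_def cart_eq_inner_axis axis_eq_axis prod.UNION_disjoint inner_diff_left)
  finally show "emeasure (distr lborel borel coords) (box l u) = (\<Prod>b\<in>Basis. (u - l) \<bullet> b)" .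
qed simp

lemma lborel_distr_orthogonal_transformation:
  fixes U :: "'a::euclidean_space \<Rightarrow> 'a"
  assumes U: "orthogonal_transformation U"
  shows "distr lborel borel U = lborel"
proof -
  define V where "V = (\<lambda>v. coords (U (of_coords v)))"
  have "linear V"
    using linear_compose[OF linear_compose[OF linear_of_coords orthogonal_transformation_linear[OF U]]
        linear_coords]
    by (simp add: V_def o_def)
  then have V: "orthogonal_transformation V"
    using U by (simp add: V_def orthogonal_transformation_def)
  have [measurable]: "U \<in> borel_measurable borel" "V \<in> borel_measurable borel"
    using U V by (simp_all add: orthogonal_transformation_borel_measurable)
  have "U = of_coords \<circ> V \<circ> coords"
    by (simp add: V_def fun_eq_iff)
  then have "distr lborel borel U = distr (distr (distr lborel borel coords) borel V) borel of_coords"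
    by (simp add: distr_distr comp_assoc)
  also have "\<dots> = distr (distr lborel borel coords) borel of_coords"
    by (simp add: lborel_distr_coords lborel_distr_orthogonal_cart[OF V])
  also have "\<dots> = lborel"
    by (simp add: distr_distr o_def distr_id2)
  finally show ?thesis .
qed

lemma uniform_measure_ball_distr_orthogonal:
  fixes U :: "'a::euclidean_space \<Rightarrow> 'a"
  assumes U: "orthogonal_transformation U"
  shows "distr (uniform_measure lborel (ball 0 r)) borel U = uniform_measure lborel (ball 0 r)"
    (is "distr ?B borel U = ?B")
proof (rule measure_eqI)
  fix A
  assume "A \<in> sets (distr ?B borel U)"
  then have A [measurable]: "A \<in> sets borel"
    by simp
  have U_borel: "U \<in> borel_measurable borel"
    using U by (rule orthogonal_transformation_borel_measurable)
  have [measurable]: "U -` A \<in> sets borel" "U -` (ball 0 r \<inter> A) \<in> sets borel"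
    using measurable_sets_borel[OF U_borel] by auto
  have "emeasure (distr ?B borel U) A = emeasure lborel (ball 0 r \<inter> U -` A) / emeasure lborel (ball (0::'a) r)"
    using U_borel by (simp add: emeasure_distr)
  also have "ball 0 r \<inter> U -` A = U -` (ball 0 r \<inter> A)"
    using orthogonal_transformation_norm[OF U] by auto
  also have "emeasure lborel (U -` (ball 0 r \<inter> A)) = emeasure (distr lborel borel U) (ball 0 r \<inter> A)"
    using U_borel by (simp add: emeasure_distr)
  finally show "emeasure (distr ?B borel U) A = emeasure ?B A"
    by (simp add: lborel_distr_orthogonal_transformation[OF U])
qed simp

lemma sets_unif_sphere [measurable_cong]: "sets unif_sphere = sets borel"
  by (simp add: unif_sphere_def)

lemma space_unif_sphere [simp]: "space unif_sphere = UNIV"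
  by (simp add: unif_sphere_def)

lemma prob_space_unif_sphere: "prob_space (unif_sphere :: 'a::euclidean_space measure)"
  unfolding unif_sphere_def
proof (intro prob_space.prob_space_distr prob_space_uniform_measure)
  show "emeasure lborel (ball (0::'a) 1) \<noteq> \<infinity>"
    using emeasure_lborel_ball_finite by (simp add: less_top)
  then show "emeasure lborel (ball (0::'a) 1) \<noteq> 0"
    using content_ball_pos[of 1 "0::'a"] by (simp add: emeasure_eq_ennreal_measure)
qed simp

lemma AE_unif_sphere_norm: "AE z in unif_sphere. norm (z::'a::euclidean_space) = 1"
proof -
  have "AE x in uniform_measure lborel (ball (0::'a) 1). x \<noteq> 0"
    by (rule AE_uniform_measureI) (auto intro: AE_mp[OF AE_lborel_singleton[of 0]])
  then show ?thesis
    unfolding unif_sphere_def by (subst AE_distr_iff) (auto elim!: eventually_mono)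
qed

lemma unif_sphere_distr_orthogonal:
  fixes U :: "'a::euclidean_space \<Rightarrow> 'a"
  assumes U: "orthogonal_transformation U"
  shows "distr unif_sphere borel U = unif_sphere"
proof -
  let ?B = "uniform_measure lborel (ball (0::'a) 1)"
  have [measurable]: "U \<in> borel_measurable borel"
    using U by (rule orthogonal_transformation_borel_measurable)
  have "U \<circ> (\<lambda>x. x /\<^sub>R norm x) = (\<lambda>x. x /\<^sub>R norm x) \<circ> U"
    by (simp add: fun_eq_iff orthogonal_transformation_scaleR[OF U] orthogonal_transformation_norm[OF U])
  then have "distr unif_sphere borel U = distr (distr ?B borel U) borel (\<lambda>x. x /\<^sub>R norm x)"
    by (simp add: unif_sphere_def distr_distr)
  then show ?thesis
    by (simp add: uniform_measure_ball_distr_orthogonal[OF U] unif_sphere_def)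
qed

lemma nn_integral_unif_sphere_orthogonal:
  fixes U :: "'a::euclidean_space \<Rightarrow> 'a"
  assumes U: "orthogonal_transformation U" and [measurable]: "f \<in> borel_measurable borel"
  shows "(\<integral>\<^sup>+z. f (U z) \<partial>unif_sphere) = (\<integral>\<^sup>+z. f z \<partial>unif_sphere)"
proof -
  have [measurable]: "U \<in> borel_measurable borel"
    using U by (rule orthogonal_transformation_borel_measurable)
  have "(\<integral>\<^sup>+z. f (U z) \<partial>unif_sphere) = (\<integral>\<^sup>+z. f z \<partial>distr unif_sphere borel U)"
    by (simp add: nn_integral_distr)
  then show ?thesis
    by (simp add: unif_sphere_distr_orthogonal[OF U])
qed

lemma orthogonal_transformation_exists_real_inner:
  fixes x y :: "'a::real_inner"
  assumes "norm x = norm y"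
  obtains U where "orthogonal_transformation U" "U x = y"
proof (cases "x = y")
  case True
  then show ?thesis
    using that[of "\<lambda>v. v"] by simp
next
  case False
  define w where "w = x - y"
  define U where "U v = v - (2 * (v \<bullet> w) / (w \<bullet> w)) *\<^sub>R w" for v
  have w: "w \<bullet> w \<noteq> 0"
    using False by (simp add: w_def)
  have "linear U"
    unfolding U_def by (rule linearI) (simp_all add: inner_add_left algebra_simps add_divide_distrib)
  moreover have "U v \<bullet> U u = v \<bullet> u" for v u
    using w by (simp add: U_def inner_diff_left inner_diff_right inner_commute field_simps)
  ultimately have orth: "orthogonal_transformation U"
    by (simp add: orthogonal_transformation_def)
  have "x \<bullet> x = y \<bullet> y"
    using assms by (metis power2_norm_eq_inner)
  then have "w \<bullet> w = 2 * (x \<bullet> w)"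
    by (simp add: w_def inner_diff_left inner_diff_right inner_commute)
  then have "U x = y"
    using w by (simp add: U_def w_def)
  with orth show ?thesis
    by (rule that)
qed

lemma rot_invariant_nn_integral:
  fixes X :: "'s \<Rightarrow> 'a::euclidean_space"
  assumes rot: "rot_invariant M X" and [measurable]: "X \<in> borel_measurable M"
    and U: "orthogonal_transformation U" and [measurable]: "f \<in> borel_measurable borel"
  shows "(\<integral>\<^sup>+\<omega>. f (U (X \<omega>)) \<partial>M) = (\<integral>\<^sup>+\<omega>. f (X \<omega>) \<partial>M)"
proof -
  have [measurable]: "U \<in> borel_measurable borel"
    using U by (rule orthogonal_transformation_borel_measurable)
  have "(\<integral>\<^sup>+\<omega>. f (U (X \<omega>)) \<partial>M) = (\<integral>\<^sup>+y. f y \<partial>distr M borel (\<lambda>\<omega>. U (X \<omega>)))"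
    by (simp add: nn_integral_distr)
  also have "\<dots> = (\<integral>\<^sup>+y. f y \<partial>distr M borel X)"
    using rot U by (simp add: rot_invariant_def)
  finally show ?thesis
    by (simp add: nn_integral_distr)
qed

lemma rot_invariant_laplace_radial:
  fixes X :: "'s \<Rightarrow> 'a::euclidean_space"
  assumes "rot_invariant M X" and "X \<in> borel_measurable M" and "norm v = norm w"
  shows "(\<integral>\<^sup>+\<omega>. ennreal (exp (X \<omega> \<bullet> v)) \<partial>M) = (\<integral>\<^sup>+\<omega>. ennreal (exp (X \<omega> \<bullet> w)) \<partial>M)"
proof -
  obtain U where U: "orthogonal_transformation U" "U v = w"
    using orthogonal_transformation_exists_real_inner[OF assms(3)] by blast
  then have "X \<omega> \<bullet> v = U (X \<omega>) \<bullet> w" for \<omega>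
    by (auto simp: orthogonal_transformation_def)
  then show ?thesis
    using rot_invariant_nn_integral[OF assms(1,2) U(1), of "\<lambda>x. ennreal (exp (x \<bullet> w))"] by simp
qed

lemma borel_measurable_cosh [measurable]: "(cosh :: real \<Rightarrow> real) \<in> borel_measurable borel"
  by (intro borel_measurable_continuous_onI continuous_on_cosh continuous_on_id)

lemma ennreal_mult_left_cancel:
  fixes a b c :: ennreal
  assumes "c \<noteq> 0" and "c \<noteq> top"
  shows "c * a = c * b \<longleftrightarrow> a = b"
  using ennreal_mult_le_mult_iff[OF assms, of a b] ennreal_mult_le_mult_iff[OF assms, of b a]
  by (auto intro: antisym)

definition unif_sphere_mgf :: "'a::euclidean_space \<Rightarrow> ennreal"
  where "unif_sphere_mgf x = (\<integral>\<^sup>+z. ennreal (exp (x \<bullet> z)) \<partial>unif_sphere)"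

lemma unif_sphere_mgf_radial:
  fixes x y :: "'a::euclidean_space"
  assumes "norm x = norm y"
  shows "unif_sphere_mgf x = unif_sphere_mgf y"
proof -
  obtain U where U: "orthogonal_transformation U" "U y = x"
    using orthogonal_transformation_exists_real_inner[OF assms[symmetric]] by blast
  then have "x \<bullet> U z = y \<bullet> z" for z
    by (auto simp: orthogonal_transformation_def)
  then show ?thesis
    using nn_integral_unif_sphere_orthogonal[OF U(1), of "\<lambda>z. ennreal (exp (x \<bullet> z))"]
    by (simp add: unif_sphere_mgf_def)
qed

lemma unif_sphere_mgf_eq_cosh:
  "unif_sphere_mgf (x :: 'a::euclidean_space) = (\<integral>\<^sup>+z. ennreal (cosh (x \<bullet> z)) \<partial>unif_sphere)"
proof -
  have exp_cosh: "ennreal (exp t) + ennreal (exp (- t)) = 2 * ennreal (cosh t)" for t :: real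
  proof -
    have "exp t + exp (- t) = 2 * cosh t"
      by (simp add: cosh_def)
    then show ?thesis
      by (simp add: ennreal_mult flip: ennreal_plus)
  qed
  have "2 * unif_sphere_mgf x = unif_sphere_mgf x + unif_sphere_mgf (- x)"
    using unif_sphere_mgf_radial[of x "- x"] by (simp add: mult_2)
  also have "\<dots> = (\<integral>\<^sup>+z. ennreal (exp (x \<bullet> z)) + ennreal (exp (- (x \<bullet> z))) \<partial>unif_sphere)"
    by (simp add: unif_sphere_mgf_def nn_integral_add)
  also have "\<dots> = 2 * (\<integral>\<^sup>+z. ennreal (cosh (x \<bullet> z)) \<partial>unif_sphere)"
    unfolding exp_cosh by (rule nn_integral_cmult) measurable
  finally show ?thesis
    by (simp add: ennreal_mult_left_cancel)
qed

lemma unif_sphere_mgf_ge_1: "1 \<le> unif_sphere_mgf (x :: 'a::euclidean_space)"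
proof -
  have "(\<integral>\<^sup>+(z::'a). 1 \<partial>unif_sphere) \<le> (\<integral>\<^sup>+z. ennreal (cosh (x \<bullet> z)) \<partial>unif_sphere)"
    by (rule nn_integral_mono) (simp add: cosh_real_ge_1)
  then show ?thesis
    using prob_space.emeasure_space_1[OF prob_space_unif_sphere[where 'a='a]]
    by (simp add: unif_sphere_mgf_eq_cosh)
qed

lemma convex_on_sinh_nonneg: "convex_on {0..} (sinh :: real \<Rightarrow> real)"
proof (rule f''_ge0_imp_convex[where f' = cosh and f'' = sinh])
  show "DERIV sinh x :> cosh x" "DERIV cosh x :> sinh x" for x :: real
    by (auto intro!: derivative_eq_intros)
qed auto

lemma sinh_mult_le_mult_sinh:
  fixes s t b :: real
  assumes "0 < s" "s \<le> t" "0 \<le> b"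
  shows "t * sinh (b * s) \<le> s * sinh (b * t)"
proof -
  have "sinh ((1 - s / t) *\<^sub>R 0 + (s / t) *\<^sub>R (b * t)) \<le> (1 - s / t) * sinh 0 + (s / t) * sinh (b * t)"
    using assms by (intro convex_onD[OF convex_on_sinh_nonneg]) auto
  then show ?thesis
    using assms by (simp add: field_simps)
qed

text \<open>The left-hand side is the tangent of the convex function \<open>u \<mapsto> cosh (b * sqrt u)\<close>
  at \<open>u = c\<^sup>2\<close>.\<close>
lemma cosh_ge_tangent_square_nonneg:
  fixes b c s :: real
  assumes c: "0 < c" and "0 \<le> s" and "0 \<le> b"
  shows "cosh (b * c) + b * sinh (b * c) / (2 * c) * (s\<^sup>2 - c\<^sup>2) \<le> cosh (b * s)"
proof -
  define K where "K = b * sinh (b * c) / (2 * c)"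
  define F where "F s = cosh (b * s) - K * s\<^sup>2" for s
  define F' where "F' z = b * sinh (b * z) - K * (2 * z)" for z
  have F': "DERIV F z :> F' z" for z
    unfolding F_def F'_def by (auto intro!: derivative_eq_intros simp: power2_eq_square algebra_simps)
  have sign: "c * F' z = b * (c * sinh (b * z) - z * sinh (b * c))" for z
    using c by (simp add: F'_def K_def field_simps)
  have "F c \<le> F s"
  proof (cases s c rule: linorder_cases)
    case less
    then obtain z where z: "s < z" "z < c" "F c - F s = (c - s) * F' z"
      using MVT2[OF less F'] by blast
    then have "c * F' z \<le> 0"
      using sinh_mult_le_mult_sinh[of z c b] assms unfolding sign
      by (simp add: mult_nonneg_nonpos mult.commute)
    then have "(c - s) * F' z \<le> 0"
      using z c by (simp add: mult_le_0_iff)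
    then show ?thesis
      using z(3) by linarith
  next
    case greater
    then obtain z where z: "c < z" "z < s" "F s - F c = (s - c) * F' z"
      using MVT2[OF greater F'] by blast
    then have "0 \<le> c * F' z"
      using sinh_mult_le_mult_sinh[of c z b] assms unfolding sign by (simp add: mult.commute)
    then have "0 \<le> (s - c) * F' z"
      using z c by (simp add: zero_le_mult_iff)
    then show ?thesis
      using z(3) by linarith
  qed simp
  then have "cosh (b * c) + K * (s\<^sup>2 - c\<^sup>2) \<le> cosh (b * s)"
    by (simp add: F_def right_diff_distrib)
  then show ?thesis
    by (simp only: K_def)
qed

lemma cosh_ge_tangent_square:
  fixes b c s :: real
  assumes "0 < c"
  shows "cosh (b * c) + b * sinh (b * c) / (2 * c) * (s\<^sup>2 - c\<^sup>2) \<le> cosh (b * s)"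
  using cosh_ge_tangent_square_nonneg[of c "\<bar>s\<bar>" "\<bar>b\<bar>"] assms
  by (cases "0 \<le> b"; cases "0 \<le> s") (simp_all add: abs_if)

lemma (in prob_space) cosh_le_nn_integral_cosh:
  fixes R :: "'a \<Rightarrow> real"
  assumes [measurable]: "R \<in> borel_measurable M"
    and second_moment: "(\<integral>\<^sup>+\<omega>. ennreal ((R \<omega>)\<^sup>2) \<partial>M) = ennreal (c\<^sup>2)" and c: "0 < c"
  shows "ennreal (cosh (b * c)) \<le> (\<integral>\<^sup>+\<omega>. ennreal (cosh (b * R \<omega>)) \<partial>M)"
proof -
  define K where "K = b * sinh (b * c) / (2 * c)"
  have "0 \<le> b * sinh (b * c)"
    using c by (cases "0 \<le> b") (auto simp: zero_le_mult_iff mult_nonpos_nonpos mult_nonpos_nonneg)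
  then have K: "0 \<le> K"
    using c by (simp add: K_def)
  have pointwise: "ennreal (cosh (b * c)) + ennreal K * ennreal ((R \<omega>)\<^sup>2)
      \<le> ennreal (cosh (b * R \<omega>)) + ennreal (K * c\<^sup>2)" for \<omega>
  proof -
    have "cosh (b * c) + K * (R \<omega>)\<^sup>2 \<le> cosh (b * R \<omega>) + K * c\<^sup>2"
      using cosh_ge_tangent_square[OF c, of b "R \<omega>"]
      unfolding K_def[symmetric] right_diff_distrib by linarith
    then show ?thesis
      using K by (simp add: ennreal_mult[symmetric] ennreal_plus[symmetric] ennreal_leI del: ennreal_plus)
  qed
  have "ennreal (cosh (b * c)) + ennreal (K * c\<^sup>2)
      = (\<integral>\<^sup>+\<omega>. ennreal (cosh (b * c)) + ennreal K * ennreal ((R \<omega>)\<^sup>2) \<partial>M)"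
    using K by (simp add: nn_integral_add nn_integral_cmult second_moment emeasure_space_1 ennreal_mult)
  also have "\<dots> \<le> (\<integral>\<^sup>+\<omega>. ennreal (cosh (b * R \<omega>)) + ennreal (K * c\<^sup>2) \<partial>M)"
    by (intro nn_integral_mono pointwise)
  also have "\<dots> = (\<integral>\<^sup>+\<omega>. ennreal (cosh (b * R \<omega>)) \<partial>M) + ennreal (K * c\<^sup>2)"
    by (simp add: nn_integral_add emeasure_space_1)
  finally show ?thesis
    by (simp add: ennreal_add_left_cancel_le add.commute)
qed

lemma isotropic_nn_integral_norm_sq:
  fixes X :: "'s \<Rightarrow> 'a::euclidean_space"
  assumes "isotropic M X"
  shows "(\<integral>\<^sup>+\<omega>. ennreal ((norm (X \<omega>))\<^sup>2) \<partial>M) = ennreal (real DIM('a))"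
proof -
  have coord: "integrable M (\<lambda>\<omega>. (X \<omega> \<bullet> b)\<^sup>2)" "(\<integral>\<omega>. (X \<omega> \<bullet> b)\<^sup>2 \<partial>M) = 1" if "b \<in> Basis" for b
    using assms that by (simp_all add: isotropic_def)
  have "(norm (X \<omega>))\<^sup>2 = (\<Sum>b\<in>Basis. (X \<omega> \<bullet> b)\<^sup>2)" for \<omega>
    unfolding power2_norm_eq_inner by (subst euclidean_inner) (simp add: power2_eq_square)
  moreover have "(\<integral>\<^sup>+\<omega>. ennreal (\<Sum>b\<in>Basis. (X \<omega> \<bullet> b)\<^sup>2) \<partial>M)
      = ennreal (\<integral>\<omega>. (\<Sum>b\<in>Basis. (X \<omega> \<bullet> b)\<^sup>2) \<partial>M)"
    by (rule nn_integral_eq_integral) (auto intro!: integrable_sum coord sum_nonneg)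
  moreover have "(\<integral>\<omega>. (\<Sum>b\<in>Basis. (X \<omega> \<bullet> b)\<^sup>2) \<partial>M) = (\<Sum>b\<in>(Basis :: 'a set). 1)"
    by (subst Bochner_Integration.integral_sum) (simp_all add: coord)
  ultimately show ?thesis
    by simp
qed

lemma rot_invariant_laplace_eq_mixture:
  fixes X :: "'s \<Rightarrow> 'a::euclidean_space"
  assumes "sigma_finite_measure M" and rot: "rot_invariant M X"
    and [measurable]: "X \<in> borel_measurable M"
  shows "(\<integral>\<^sup>+\<omega>. ennreal (exp (X \<omega> \<bullet> \<xi>)) \<partial>M) = (\<integral>\<^sup>+\<omega>. unif_sphere_mgf (norm (X \<omega>) *\<^sub>R \<xi>) \<partial>M)"
proof -
  interpret S: prob_space "unif_sphere :: 'a measure"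
    by (rule prob_space_unif_sphere)
  interpret pair_sigma_finite M "unif_sphere :: 'a measure"
    using assms(1) S.sigma_finite_measure_axioms by (simp add: pair_sigma_finite_def)
  have "(\<integral>\<^sup>+\<omega>. ennreal (exp (X \<omega> \<bullet> \<xi>)) \<partial>M)
      = (\<integral>\<^sup>+(z::'a). (\<integral>\<^sup>+\<omega>. ennreal (exp (X \<omega> \<bullet> \<xi>)) \<partial>M) \<partial>unif_sphere)"
    using S.emeasure_space_1 by simp
  also have "\<dots> = (\<integral>\<^sup>+z. (\<integral>\<^sup>+\<omega>. ennreal (exp (X \<omega> \<bullet> (norm \<xi> *\<^sub>R z))) \<partial>M) \<partial>unif_sphere)"
  proof (rule nn_integral_cong_AE)
    show "AE z in unif_sphere. (\<integral>\<^sup>+\<omega>. ennreal (exp (X \<omega> \<bullet> \<xi>)) \<partial>M)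
        = (\<integral>\<^sup>+\<omega>. ennreal (exp (X \<omega> \<bullet> (norm \<xi> *\<^sub>R z))) \<partial>M)"
      using AE_unif_sphere_norm
      by eventually_elim (rule rot_invariant_laplace_radial[OF rot]; simp)
  qed
  also have "\<dots> = (\<integral>\<^sup>+\<omega>. (\<integral>\<^sup>+z. ennreal (exp ((norm \<xi> *\<^sub>R X \<omega>) \<bullet> z)) \<partial>unif_sphere) \<partial>M)"
    by (subst Fubini') (simp_all add: mult.commute)
  also have "\<dots> = (\<integral>\<^sup>+\<omega>. unif_sphere_mgf (norm (X \<omega>) *\<^sub>R \<xi>) \<partial>M)"
  proof (rule nn_integral_cong)
    fix \<omega>
    show "(\<integral>\<^sup>+z. ennreal (exp ((norm \<xi> *\<^sub>R X \<omega>) \<bullet> z)) \<partial>unif_sphere)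
        = unif_sphere_mgf (norm (X \<omega>) *\<^sub>R \<xi>)"
      using unif_sphere_mgf_radial[of "norm \<xi> *\<^sub>R X \<omega>" "norm (X \<omega>) *\<^sub>R \<xi>"]
      by (simp add: unif_sphere_mgf_def)
  qed
  finally show ?thesis .
qed

lemma unif_sphere_mgf_le_laplace:
  fixes X :: "'s \<Rightarrow> 'a::euclidean_space"
  assumes "prob_space M" and [measurable]: "X \<in> borel_measurable M"
    and "rot_invariant M X" and "isotropic M X"
  shows "unif_sphere_mgf (sqrt (real DIM('a)) *\<^sub>R \<xi>) \<le> (\<integral>\<^sup>+\<omega>. ennreal (exp (X \<omega> \<bullet> \<xi>)) \<partial>M)"
proof -
  interpret M: prob_space M
    by fact
  interpret S: prob_space "unif_sphere :: 'a measure"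
    by (rule prob_space_unif_sphere)
  interpret pair_sigma_finite "unif_sphere :: 'a measure" M
    by (simp add: pair_sigma_finite_def M.sigma_finite_measure_axioms S.sigma_finite_measure_axioms)
  define c where "c = sqrt (real DIM('a))"
  have c: "0 < c" "c\<^sup>2 = real DIM('a)"
    by (simp_all add: c_def)
  have "unif_sphere_mgf (c *\<^sub>R \<xi>) = (\<integral>\<^sup>+z. ennreal (cosh ((\<xi> \<bullet> z) * c)) \<partial>unif_sphere)"
    by (simp add: unif_sphere_mgf_eq_cosh mult.commute)
  also have "\<dots> \<le> (\<integral>\<^sup>+z. (\<integral>\<^sup>+\<omega>. ennreal (cosh ((\<xi> \<bullet> z) * norm (X \<omega>))) \<partial>M) \<partial>unif_sphere)"
    using isotropic_nn_integral_norm_sq[OF \<open>isotropic M X\<close>] c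
    by (intro nn_integral_mono M.cosh_le_nn_integral_cosh) simp_all
  also have "\<dots> = (\<integral>\<^sup>+\<omega>. (\<integral>\<^sup>+z. ennreal (cosh ((norm (X \<omega>) *\<^sub>R \<xi>) \<bullet> z)) \<partial>unif_sphere) \<partial>M)"
    by (subst Fubini') (simp_all add: mult.commute)
  also have "\<dots> = (\<integral>\<^sup>+\<omega>. ennreal (exp (X \<omega> \<bullet> \<xi>)) \<partial>M)"
    using rot_invariant_laplace_eq_mixture[OF M.sigma_finite_measure_axioms assms(3,2)]
    by (simp add: unif_sphere_mgf_eq_cosh)
  finally show ?thesis
    by (simp add: c_def)
qed

lemma laplace_scaled_eq_unif_sphere_mgf:
  assumes [measurable]: "\<theta> \<in> borel_measurable N" and "distr N borel \<theta> = unif_sphere"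
  shows "(\<integral>\<^sup>+\<omega>. ennreal (exp ((r *\<^sub>R \<theta> \<omega>) \<bullet> \<xi>)) \<partial>N) = unif_sphere_mgf (r *\<^sub>R \<xi>)"
proof -
  have "(\<integral>\<^sup>+\<omega>. ennreal (exp ((r *\<^sub>R \<theta> \<omega>) \<bullet> \<xi>)) \<partial>N)
      = (\<integral>\<^sup>+z. ennreal (exp ((r *\<^sub>R \<xi>) \<bullet> z)) \<partial>distr N borel \<theta>)"
    by (simp add: nn_integral_distr inner_commute)
  then show ?thesis
    by (simp add: assms(2) unif_sphere_mgf_def)
qed

lemma log_laplace_mono:
  assumes "0 < (\<integral>\<^sup>+\<omega>. ennreal (exp (Y \<omega> \<bullet> \<xi>)) \<partial>N)"
    and "(\<integral>\<^sup>+\<omega>. ennreal (exp (Y \<omega> \<bullet> \<xi>)) \<partial>N) \<le> (\<integral>\<^sup>+\<omega>. ennreal (exp (X \<omega> \<bullet> \<xi>)) \<partial>M)"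
  shows "log_laplace N Y \<xi> \<le> log_laplace M X \<xi>"
proof -
  define a where "a = (\<integral>\<^sup>+\<omega>. ennreal (exp (Y \<omega> \<bullet> \<xi>)) \<partial>N)"
  define b where "b = (\<integral>\<^sup>+\<omega>. ennreal (exp (X \<omega> \<bullet> \<xi>)) \<partial>M)"
  have "0 < a" "a \<le> b"
    using assms by (simp_all add: a_def b_def)
  show ?thesis
  proof (cases "b = \<infinity>")
    case False
    then have "a \<noteq> \<infinity>"
      using \<open>a \<le> b\<close> by (auto simp: top_unique)
    then have "ln (enn2real a) \<le> ln (enn2real b)"
      using \<open>0 < a\<close> \<open>a \<le> b\<close> False by (simp add: enn2real_mono enn2real_positive_iff less_top)
    then show ?thesis
      using False \<open>a \<noteq> \<infinity>\<close> by (simp add: log_laplace_def a_def[symmetric] b_def[symmetric])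
  qed (simp add: log_laplace_def b_def[symmetric])
qed

lemma legendre_antimono:
  assumes "\<And>\<xi>. \<Lambda>\<^sub>1 \<xi> \<le> \<Lambda>\<^sub>2 \<xi>"
  shows "legendre \<Lambda>\<^sub>2 x \<le> legendre \<Lambda>\<^sub>1 x"
  unfolding legendre_def using assms by (intro SUP_mono) (auto intro: ereal_minus_mono)

theorem proposition4p2:
  fixes M :: "'s measure" and N :: "'t measure"
    and X :: "'s \<Rightarrow> 'a::euclidean_space" and \<theta> :: "'t \<Rightarrow> 'a"
  assumes "prob_space M" and "X \<in> borel_measurable M"
    and "rot_invariant M X" and "isotropic M X"
    and "prob_space N" and "\<theta> \<in> borel_measurable N"
    and "distr N borel \<theta> = unif_sphere"
  shows "(\<forall>\<xi>. log_laplace M X \<xi> \<ge> log_laplace N (\<lambda>\<omega>. sqrt (real DIM('a)) *\<^sub>R \<theta> \<omega>) \<xi>)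
       \<and> (\<forall>x. legendre (log_laplace M X) x
               \<le> legendre (log_laplace N (\<lambda>\<omega>. sqrt (real DIM('a)) *\<^sub>R \<theta> \<omega>)) x)"
proof -
  have laplace: "log_laplace N (\<lambda>\<omega>. sqrt (real DIM('a)) *\<^sub>R \<theta> \<omega>) \<xi> \<le> log_laplace M X \<xi>" for \<xi>
  proof (rule log_laplace_mono)
    have "(\<integral>\<^sup>+\<omega>. ennreal (exp ((sqrt (real DIM('a)) *\<^sub>R \<theta> \<omega>) \<bullet> \<xi>)) \<partial>N)
        = unif_sphere_mgf (sqrt (real DIM('a)) *\<^sub>R \<xi>)"
      using assms(6,7) by (rule laplace_scaled_eq_unif_sphere_mgf)
    then show "0 < (\<integral>\<^sup>+\<omega>. ennreal (exp ((sqrt (real DIM('a)) *\<^sub>R \<theta> \<omega>) \<bullet> \<xi>)) \<partial>N)"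
      and "(\<integral>\<^sup>+\<omega>. ennreal (exp ((sqrt (real DIM('a)) *\<^sub>R \<theta> \<omega>) \<bullet> \<xi>)) \<partial>N)
        \<le> (\<integral>\<^sup>+\<omega>. ennreal (exp (X \<omega> \<bullet> \<xi>)) \<partial>M)"
      using unif_sphere_mgf_ge_1 unif_sphere_mgf_le_laplace[OF assms(1-4)]
      by (auto intro: order.strict_trans2[OF zero_less_one])
  qed
  then show ?thesis
    by (auto intro: legendre_antimono)
qed

end
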